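(* Fix parameters $\tau\in(0,1/100)$ and $M\ge2$, and let $\theta=2+\tau$. Let $G=(\mu,\mathcal{V},\mathcal{W},\mathcal{E},\mathcal{P},f,g)$ be a non-trivial GCD graph which is maximal, such that \[ \mathcal{R}(G)\subseteq\{p> C_6\} \quad\text{and}\quad \mathcal{R}^\flat(G)=\emptyset . \] Let $n\ge1$ and, for each prime $p$, let $a_{p,1},\dots,a_{p,n}$ be non-negative weights. Then there is a structured GCD subgraph $G'$ of $G$ with edge set $\mathcal{E}'$ such that: (a) $G'$ is non-trivial and maximal; (b) $\sum_{p\in v/w,\ p\in\mathcal{R}(G)} a_{p,i} \le C_8\, n\sum_{p\in\mathcal{R}(G)}\frac{a_{p,i}}{p}$ for all $i\in\{1,\dots,n\}$ and all $(v,w)\in\mathcal{E}'$; (c) $q(G')\geqslant q(G)/2$.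
   Context: For a prime $p$, $k\in\mathbb{Z}$ and $\rho\in\mathbb{Q}_{>0}$, write $\operatorname{e}_p(\rho)=k$ if $\rho=p^ka/q$ with $a,q\in\mathbb{N}$, $p\nmid aq$. Write $p\in\rho$ if $\rho=a/q$ with $\gcd(a,q)=1$ and $p\mid aq$. For real $t$, $t^+=\max\{t,0\}$, $t^-=\max\{-t,0\}$. Weighted bipartite graph: $(\mu,\mathcal{V},\mathcal{W},\mathcal{E})$ with $\mu:\mathbb{R}_{>0}\to\mathbb{R}_{>0}$, $\mathcal{V},\mathcal{W}$ finite sets of positive reals, $\mathcal{E}\subseteq\mathcal{V}\times\mathcal{W}$; $\mu(\mathcal{T})=\sum_{t\in\mathcal{T}}\mu(t)$, $\mu(\mathcal{E})=\sum_{(v,w)\in\mathcal{E}}\mu(v)\mu(w)$; edge density $\delta=\mu(\mathcal{E})/(\mu(\mathcal{V})\mu(\mathcal{W}))$ if $\mathcal{E}\neq\emptyset$, else $0$; $\mu^{(\theta)}=\delta^\theta\mu(\mathcal{V})\mu(\mathcal{W})$. A subgraph has $\mathcal{V}'\subseteq\mathcal{V}$, $\mathcal{W}'\subseteq\mathcal{W}$, $\mathcal{E}'\subseteq\mathcal{E}\cap(\mathcal{V}'\times\mathcal{W}')$, same $\mu$. "Maximal" means $\mu^{(\theta)}(G)\ge\mu^{(\theta)}(G')$ for every subgraph $G'$ (with $\theta=2+\tau$). GCD graph: a septuple $G=(\mu,\mathcal{V},\mathcal{W},\mathcal{E},\mathcal{P},f,g)$ where $(\mu,\mathcal{V},\mathcal{W},\mathcal{E})$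 is a weighted bipartite graph with $\mathcal{V},\mathcal{W}\subset\mathbb{Q}_{>0}$, $\mathcal{P}$ is a set of primes, $f,g:\mathcal{P}\to\mathbb{Z}$, and for all $p\in\mathcal{P}$ and all $(a/q,b/r)\in\mathcal{V}\times\mathcal{W}$ with $\gcd(a,q)=\gcd(b,r)=1$: $p^{f^+(p)}\mid a$, $p^{g^+(p)}\mid b$, $p^{f^-(p)}\mid q$, $p^{g^-(p)}\mid r$, and if $(a/q,b/r)\in\mathcal{E}$ then the exact power of $p$ dividing $\gcd(a,b)$ is $p^{\min\{f^+(p),g^+(p)\}}$ and that dividing $\gcd(q,r)$ is $p^{\min\{f^-(p),g^-(p)\}}$. $G$ is non-trivial if $\mathcal{E}\neq\emptyset$. Quality: $q(G)=\mu^{(\theta)}(G)\prod_{p\in\mathcal{P}}p^{|f(p)-g(p)|}$. A GCD subgraph $G'=(\mu,\mathcal{V}',\mathcal{W}',\mathcal{E}',\mathcal{P}',f',g')$ of $G$ has $\mathcal{V}'\subseteq\mathcal{V}$, $\mathcal{W}'\subseteq\mathcal{W}$, $\mathcal{E}'\subseteq\mathcal{E}$, $\mathcal{P}'\supseteq\mathcal{P}$, $f'|_{\mathcal{P}}=f$, $g'|_{\mathcal{P}}=g$. $\mathcal{V}_{p^k}=\{v\in\mathcal{V}:\operatorname{e}_p(v)=k\}$, similarly $\mathcal{W}_{p^\ell}$; $\mathcal{E}_{p^k,p^\ell}=\mathcal{E}\cap(\mathcal{V}_{p^k}\times\mathcal{W}_{p^\ell})$; for $p\notin\mathcal{P}$,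 $G_{p^k,p^\ell}=(\mu,\mathcal{V}_{p^k},\mathcal{W}_{p^\ell},\mathcal{E}_{p^k,p^\ell},\mathcal{P}\cup\{p\},f_{p^k},g_{p^\ell})$ where $f_{p^k},g_{p^\ell}$ extend $f,g$ by $f_{p^k}(p)=k$, $g_{p^\ell}(p)=\ell$. $\mathcal{R}(G)$ is the set of primes $p\notin\mathcal{P}$ for which there is $(a/q,b/r)\in\mathcal{E}$ with $\gcd(a,q)=\gcd(b,r)=1$ and $p\mid\gcd(a,b)\gcd(q,r)$. Constants: $C_1=10^4/\tau$, $C_2=10MC_1^3$, $C_4=10^{10}M^2C_2^2$, $C_6=\max\{C_4,10^4MC_2,C_2^{10/\tau}\}$, $C_8=100MC_2$. $\mathcal{R}^\sharp(G)$ is the set of $p\in\mathcal{R}(G)$ such that (i) there is $k\in\mathbb{Z}$ with $\mu(\mathcal{V}_{p^k})\ge(1-C_2/p)\mu(\mathcal{V})$ and $\mu(\mathcal{W}_{p^k})\ge(1-C_2/p)\mu(\mathcal{W})$, and (ii) $q(G_{p^i,p^j})<M\,q(G)$ for all $(i,j)\in\mathbb{Z}^2$ with $i\ne j$. $\mathcal{R}^\flat(G)=\mathcal{R}(G)\setminus\mathcal{R}^\sharp(G)$. $G$ is structured if for each $p\in\mathcal{R}(G)$ there is $k_p\in\mathbb{Z}$ with $(\operatorname{e}_p(v)-k_p,\operatorname{e}_p(w)-k_p)\in\{(-1,0),(0,-1),(0,0),(0,1),(1,0)\}$ for all $(v,w)\in\mathcal{E}$. A structured GCD subgraph is a GCD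 subgraph that is structured. *)

theory Defs
  imports "HOL-Computational_Algebra.Computational_Algebra"
begin

definition numer :: "rat \<Rightarrow> int" where
  "numer x = fst (quotient_of x)"

definition denom :: "rat \<Rightarrow> int" where
  "denom x = snd (quotient_of x)"

definition ep :: "nat \<Rightarrow> rat \<Rightarrow> int" where
  "ep p x = int (multiplicity (int p) (numer x)) - int (multiplicity (int p) (denom x))"

definition prime_in :: "nat \<Rightarrow> rat \<Rightarrow> bool" where
  "prime_in p x \<longleftrightarrow> int p dvd numer x * denom x"

definition muS :: "(rat \<Rightarrow> real) \<Rightarrow> rat set \<Rightarrow> real" where
  "muS \<mu> T = (\<Sum>t\<in>T. \<mu> t)"

definition muE :: "(rat \<Rightarrow> real) \<Rightarrow> (rat \<times> rat) set \<Rightarrow> real" where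
  "muE \<mu> E = (\<Sum>(v,w)\<in>E. \<mu> v * \<mu> w)"

definition density :: "(rat \<Rightarrow> real) \<Rightarrow> rat set \<Rightarrow> rat set \<Rightarrow> (rat \<times> rat) set \<Rightarrow> real" where
  "density \<mu> V W E = (if E = {} then 0 else muE \<mu> E / (muS \<mu> V * muS \<mu> W))"

definition mu_theta :: "real \<Rightarrow> (rat \<Rightarrow> real) \<Rightarrow> rat set \<Rightarrow> rat set \<Rightarrow> (rat \<times> rat) set \<Rightarrow> real" where
  "mu_theta \<theta> \<mu> V W E = density \<mu> V W E powr \<theta> * muS \<mu> V * muS \<mu> W"

definition weighted_bipartite_graph ::
  "(rat \<Rightarrow> real) \<Rightarrow> rat set \<Rightarrow> rat set \<Rightarrow> (rat \<times> rat) set \<Rightarrow> bool" where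
  "weighted_bipartite_graph \<mu> V W E \<longleftrightarrow>
     (\<forall>x>0. \<mu> x > 0) \<and> finite V \<and> finite W \<and> V \<subseteq> {x. x > 0} \<and> W \<subseteq> {x. x > 0}
     \<and> E \<subseteq> V \<times> W"

definition maximal :: "real \<Rightarrow> (rat \<Rightarrow> real) \<Rightarrow> rat set \<Rightarrow> rat set \<Rightarrow> (rat \<times> rat) set \<Rightarrow> bool" where
  "maximal \<theta> \<mu> V W E \<longleftrightarrow>
     (\<forall>V' W' E'. V' \<subseteq> V \<longrightarrow> W' \<subseteq> W \<longrightarrow> E' \<subseteq> E \<inter> (V' \<times> W') \<longrightarrow>
        mu_theta \<theta> \<mu> V' W' E' \<le> mu_theta \<theta> \<mu> V W E)"

definition gcd_graph ::
  "(rat \<Rightarrow> real) \<Rightarrow> rat set \<Rightarrow> rat set \<Rightarrow> (rat \<times> rat) set \<Rightarrow> nat set \<Rightarrow>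
   (nat \<Rightarrow> int) \<Rightarrow> (nat \<Rightarrow> int) \<Rightarrow> bool" where
  "gcd_graph \<mu> V W E P f g \<longleftrightarrow>
     weighted_bipartite_graph \<mu> V W E \<and> (\<forall>p\<in>P. prime p) \<and>
     (\<forall>p\<in>P. \<forall>v\<in>V. \<forall>w\<in>W.
        (int p) ^ nat (f p) dvd numer v \<and> (int p) ^ nat (g p) dvd numer w \<and>
        (int p) ^ nat (- f p) dvd denom v \<and> (int p) ^ nat (- g p) dvd denom w \<and>
        ((v, w) \<in> E \<longrightarrow>
           multiplicity (int p) (gcd (numer v) (numer w)) = min (nat (f p)) (nat (g p)) \<and>
           multiplicity (int p) (gcd (denom v) (denom w)) = min (nat (- f p)) (nat (- g p))))"

text \<open>Quality. The product over P only has non-trivial factors at primes with f p \<noteq> g p.\<close>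
definition quality ::
  "real \<Rightarrow> (rat \<Rightarrow> real) \<Rightarrow> rat set \<Rightarrow> rat set \<Rightarrow> (rat \<times> rat) set \<Rightarrow> nat set \<Rightarrow>
   (nat \<Rightarrow> int) \<Rightarrow> (nat \<Rightarrow> int) \<Rightarrow> real" where
  "quality \<theta> \<mu> V W E P f g =
     mu_theta \<theta> \<mu> V W E * (\<Prod>p\<in>{p\<in>P. f p \<noteq> g p}. real p ^ nat \<bar>f p - g p\<bar>)"

definition gcd_subgraph ::
  "(rat \<Rightarrow> real) \<Rightarrow> rat set \<Rightarrow> rat set \<Rightarrow> (rat \<times> rat) set \<Rightarrow> nat set \<Rightarrow>
   (nat \<Rightarrow> int) \<Rightarrow> (nat \<Rightarrow> int) \<Rightarrow>
   rat set \<Rightarrow> rat set \<Rightarrow> (rat \<times> rat) set \<Rightarrow> nat set \<Rightarrow>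
   (nat \<Rightarrow> int) \<Rightarrow> (nat \<Rightarrow> int) \<Rightarrow> bool" where
  "gcd_subgraph \<mu> V' W' E' P' f' g' V W E P f g \<longleftrightarrow>
     gcd_graph \<mu> V' W' E' P' f' g' \<and> V' \<subseteq> V \<and> W' \<subseteq> W \<and> E' \<subseteq> E \<and> P \<subseteq> P' \<and>
     (\<forall>p\<in>P. f' p = f p \<and> g' p = g p)"

definition Vpk :: "nat \<Rightarrow> int \<Rightarrow> rat set \<Rightarrow> rat set" where
  "Vpk p k V = {v\<in>V. ep p v = k}"

definition R_set :: "nat set \<Rightarrow> (rat \<times> rat) set \<Rightarrow> nat set" where
  "R_set P E = {p. prime p \<and> p \<notin> P \<and>
      (\<exists>(v, w)\<in>E. int p dvd gcd (numer v) (numer w) * gcd (denom v) (denom w))}"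

definition C1 :: "real \<Rightarrow> real" where "C1 \<tau> = 10^4 / \<tau>"
definition C2 :: "real \<Rightarrow> real \<Rightarrow> real" where "C2 \<tau> M = 10 * M * C1 \<tau> ^ 3"
definition C4 :: "real \<Rightarrow> real \<Rightarrow> real" where "C4 \<tau> M = 10^10 * M^2 * C2 \<tau> M ^ 2"
definition C6 :: "real \<Rightarrow> real \<Rightarrow> real" where
  "C6 \<tau> M = Max {C4 \<tau> M, 10^4 * M * C2 \<tau> M, C2 \<tau> M powr (10 / \<tau>)}"
definition C8 :: "real \<Rightarrow> real \<Rightarrow> real" where "C8 \<tau> M = 100 * M * C2 \<tau> M"

definition R_sharp ::
  "real \<Rightarrow> real \<Rightarrow> (rat \<Rightarrow> real) \<Rightarrow> rat set \<Rightarrow> rat set \<Rightarrow> (rat \<times> rat) set \<Rightarrow> nat set \<Rightarrow>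
   (nat \<Rightarrow> int) \<Rightarrow> (nat \<Rightarrow> int) \<Rightarrow> nat set" where
  "R_sharp \<tau> M \<mu> V W E P f g = {p \<in> R_set P E.
     (\<exists>k::int. muS \<mu> (Vpk p k V) \<ge> (1 - C2 \<tau> M / real p) * muS \<mu> V \<and>
               muS \<mu> (Vpk p k W) \<ge> (1 - C2 \<tau> M / real p) * muS \<mu> W) \<and>
     (\<forall>i j::int. i \<noteq> j \<longrightarrow>
        quality (2 + \<tau>) \<mu> (Vpk p i V) (Vpk p j W) (E \<inter> (Vpk p i V \<times> Vpk p j W))
                (insert p P) (f(p := i)) (g(p := j))
        < M * quality (2 + \<tau>) \<mu> V W E P f g)}"

definition R_flat ::
  "real \<Rightarrow> real \<Rightarrow> (rat \<Rightarrow> real) \<Rightarrow> rat set \<Rightarrow> rat set \<Rightarrow> (rat \<times> rat) set \<Rightarrow> nat set \<Rightarrow>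
   (nat \<Rightarrow> int) \<Rightarrow> (nat \<Rightarrow> int) \<Rightarrow> nat set" where
  "R_flat \<tau> M \<mu> V W E P f g = R_set P E - R_sharp \<tau> M \<mu> V W E P f g"

definition structured :: "nat set \<Rightarrow> (rat \<times> rat) set \<Rightarrow> bool" where
  "structured P E \<longleftrightarrow> (\<forall>p\<in>R_set P E. \<exists>k::int. \<forall>(v, w)\<in>E.
      (ep p v - k, ep p w - k) \<in> {(-1, 0), (0, -1), (0, 0), (0, 1), (1, 0)})"

end

theory Submission
  imports Defs
begin

text \<open>
  For every prime p of R(G), sharpness gives a dominant exponent k_p carrying all but a proportion
  C_2/p of the vertex mass on both sides, and bounds \<mu>^(\<theta>) of the refinement G_(p^i,p^j) by
  M p^-|i-j| times that of G. A subgraph with controlled \<mu>^(\<theta>) and small vertex sets carries few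
  edges, so the edges whose p-adic exponents both differ from k_p, or of which one equals k_p and
  the other lies at distance d from it, carry a share of the edge mass decaying geometrically in d.
  Hence the edges with p \<in> v/w have mass O(M C_2/p) \<mu>(E), and those violating the structure
  condition at p have mass O(M C_2^2 p^(-1-\<tau>/\<theta>)) \<mu>(E), at most \<mu>(E)/20 in total over p > C_6.
  Markov's inequality discards the edges violating (b) at a cost of \<mu>(E)/10. The remaining edges keep
  17/20 of the edge mass, hence at least (17/20)^\<theta> \<ge> 1/2 of \<mu>^(\<theta>)(G); a maximal subgraph of them
  is the required G', and its quality factor \<Prod> p^|f(p)-g(p)| is that of G.
\<close>

subsection \<open>Valuations of rationals\<close>

lemma numer_denom_eq: "x = of_int (numer x) / of_int (denom x)"
  unfolding numer_def denom_def by (rule quotient_of_div) simp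

lemma denom_nonzero: "denom x \<noteq> 0"
  using quotient_of_denom_pos'[of x] unfolding denom_def by simp

lemma numer_nonzero: "x \<noteq> 0 \<Longrightarrow> numer x \<noteq> 0"
  using numer_denom_eq[of x] by auto

lemma coprime_numer_denom: "coprime (numer x) (denom x)"
  unfolding numer_def denom_def by (rule quotient_of_coprime) simp

lemma ep_of_fraction:
  assumes "prime p" "c \<noteq> 0" "d \<noteq> 0"
  shows "ep p (of_int c / of_int d) = int (multiplicity (int p) c) - int (multiplicity (int p) d)"
proof -
  define x :: rat where "x = of_int c / of_int d"
  have nonzero: "numer x \<noteq> 0" "denom x \<noteq> 0"
    using assms by (simp_all add: numer_nonzero denom_nonzero x_def)
  have "of_int (numer x) / of_int (denom x) = (of_int c / of_int d :: rat)"
    using numer_denom_eq[of x] by (simp add: x_def)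
  then have "numer x * d = c * denom x"
    using nonzero assms by (simp add: field_simps flip: of_int_mult of_int_eq_iff)
  then have "multiplicity (int p) (numer x * d) = multiplicity (int p) (c * denom x)" by simp
  then have "multiplicity (int p) (numer x) + multiplicity (int p) d =
             multiplicity (int p) c + multiplicity (int p) (denom x)"
    using assms nonzero by (simp add: prime_elem_multiplicity_mult_distrib)
  then show ?thesis unfolding ep_def x_def by linarith
qed

lemma ep_divide:
  assumes "prime p" "v \<noteq> 0" "w \<noteq> 0"
  shows "ep p (v / w) = ep p v - ep p w"
proof -
  have nonzero: "numer v \<noteq> 0" "numer w \<noteq> 0" "denom v \<noteq> 0" "denom w \<noteq> 0"
    using assms by (simp_all add: numer_nonzero denom_nonzero)
  have "v / w = of_int (numer v * denom w) / of_int (denom v * numer w)"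
    using nonzero by (subst (1 2) numer_denom_eq) (simp add: field_simps)
  then have "ep p (v / w) = int (multiplicity (int p) (numer v * denom w))
                            - int (multiplicity (int p) (denom v * numer w))"
    using assms(1) nonzero by (simp only:) (rule ep_of_fraction; simp)
  also have "\<dots> = ep p v - ep p w"
    using assms(1) nonzero by (simp add: prime_elem_multiplicity_mult_distrib ep_def)
  finally show ?thesis .
qed

lemma ep_nonzero_if_prime_in:
  assumes p: "prime p" and "x \<noteq> 0" and "prime_in p x"
  shows "ep p x \<noteq> 0"
proof -
  have pp: "prime (int p)" using p by simp
  have "numer x \<noteq> 0" using assms(2) by (rule numer_nonzero)
  moreover have "denom x \<noteq> 0" by (rule denom_nonzero)
  ultimately have "multiplicity (int p) (numer x) = 0 \<longleftrightarrow> \<not> int p dvd numer x"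
                  "multiplicity (int p) (denom x) = 0 \<longleftrightarrow> \<not> int p dvd denom x"
    using pp by (auto intro!: multiplicity_eq_zero_iff simp: not_prime_unit)
  moreover have "int p dvd numer x \<longleftrightarrow> \<not> int p dvd denom x"
    using assms(3) coprime_numer_denom[of x] pp unfolding prime_in_def
    by (meson coprime_common_divisor not_prime_unit prime_dvd_mult_iff)
  ultimately show ?thesis unfolding ep_def by auto
qed

subsection \<open>Elementary estimates\<close>

lemma sum_power_le_geometric:
  fixes r :: real
  assumes "finite S" "0 \<le> r" "r < 1" "\<forall>m\<in>S. d \<le> m"
  shows "(\<Sum>m\<in>S. r ^ m) \<le> r ^ d / (1 - r)"
proof -
  have "inj_on (\<lambda>m. m - d) S" by (intro inj_onI) (metis assms(4) le_add_diff_inverse)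
  then have "(\<Sum>m\<in>S. r ^ m) = r ^ d * (\<Sum>m\<in>(\<lambda>m. m - d) ` S. r ^ m)"
    using assms(4) by (simp add: sum.reindex sum_distrib_left flip: power_add)
  also have "(\<Sum>m\<in>(\<lambda>m. m - d) ` S. r ^ m) \<le> (\<Sum>m. r ^ m)"
    using assms by (intro sum_le_suminf summable_geometric) auto
  also have "(\<Sum>m. r ^ m) = 1 / (1 - r)"
    using assms by (intro suminf_geometric) auto
  finally show ?thesis using assms(2) by (simp add: mult_left_mono)
qed

lemma sum_power_dist_le_geometric:
  fixes r :: real and J :: "int set"
  assumes "finite J" "0 \<le> r" "r < 1" "\<forall>j\<in>J. int d \<le> \<bar>j - k\<bar>"
  shows "(\<Sum>j\<in>J. r ^ nat \<bar>j - k\<bar>) \<le> 2 * r ^ d / (1 - r)"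
proof -
  have half: "(\<Sum>j\<in>H. r ^ nat \<bar>j - k\<bar>) \<le> r ^ d / (1 - r)"
    if "H \<subseteq> J" "inj_on (\<lambda>j. nat \<bar>j - k\<bar>) H" for H
  proof -
    have "(\<Sum>j\<in>H. r ^ nat \<bar>j - k\<bar>) = (\<Sum>m\<in>(\<lambda>j. nat \<bar>j - k\<bar>) ` H. r ^ m)"
      using that(2) by (simp add: sum.reindex)
    also have "\<dots> \<le> r ^ d / (1 - r)"
      using that assms
      by (intro sum_power_le_geometric) (auto intro: finite_subset simp: subset_iff le_nat_iff)
    finally show ?thesis .
  qed
  have "(\<Sum>j\<in>J. r ^ nat \<bar>j - k\<bar>) = (\<Sum>j\<in>{j\<in>J. j \<le> k} \<union> {j\<in>J. k < j}. r ^ nat \<bar>j - k\<bar>)"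
    by (rule sum.cong) auto
  also have "\<dots> = (\<Sum>j\<in>{j\<in>J. j \<le> k}. r ^ nat \<bar>j - k\<bar>) + (\<Sum>j\<in>{j\<in>J. k < j}. r ^ nat \<bar>j - k\<bar>)"
    using assms(1) by (intro sum.union_disjoint) auto
  also have "\<dots> \<le> r ^ d / (1 - r) + r ^ d / (1 - r)"
    by (intro add_mono half) (auto simp: inj_on_def)
  finally show ?thesis by simp
qed

lemma sum_by_level_le_geometric:
  fixes w :: "'a \<Rightarrow> real" and h :: "'a \<Rightarrow> int"
  assumes "finite S" "0 \<le> r" "r < 1" "c \<ge> 0" "\<forall>e\<in>S. int d \<le> \<bar>h e - k\<bar>"
    and level: "\<forall>j\<in>h ` S. (\<Sum>e\<in>{e\<in>S. h e = j}. w e) \<le> c * r ^ nat \<bar>j - k\<bar>"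
  shows "(\<Sum>e\<in>S. w e) \<le> c * (2 * r ^ d / (1 - r))"
proof -
  have "(\<Sum>e\<in>S. w e) = (\<Sum>j\<in>h ` S. \<Sum>e\<in>{e\<in>S. h e = j}. w e)"
    using assms(1) by (intro sum.group[symmetric]) auto
  also have "\<dots> \<le> (\<Sum>j\<in>h ` S. c * r ^ nat \<bar>j - k\<bar>)"
    using level by (intro sum_mono) auto
  also have "\<dots> \<le> c * (2 * r ^ d / (1 - r))"
    unfolding sum_distrib_left[symmetric] using assms
    by (intro mult_left_mono sum_power_dist_le_geometric) auto
  finally show ?thesis .
qed

lemma powr_difference_ge:
  fixes x \<eta> :: real
  assumes x: "x > 1" and \<eta>: "\<eta> > 0"
  shows "\<eta> * x powr (-1 - \<eta>) \<le> (x - 1) powr (-\<eta>) - x powr (-\<eta>)"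
proof -
  have "1 + \<eta> / x \<le> exp (\<eta> / x)" by (rule exp_ge_add_one_self)
  also have "\<eta> / x \<le> - \<eta> * ln (1 - 1/x)"
    using ln_le_minus_one[of "1 - 1/x"] x \<eta> mult_left_mono[of "ln (1 - 1/x)" "-1/x" \<eta>]
    by (simp add: field_simps)
  also have "exp (- \<eta> * ln (1 - 1/x)) = (1 - 1/x) powr (-\<eta>)"
    using x by (simp add: powr_def)
  finally have "1 + \<eta> / x \<le> (1 - 1/x) powr (-\<eta>)" by simp
  then have "x powr (-\<eta>) * (1 + \<eta> / x) \<le> x powr (-\<eta>) * (1 - 1/x) powr (-\<eta>)"
    by (simp add: mult_left_mono)
  also have "\<dots> = (x * (1 - 1/x)) powr (-\<eta>)"
    using x by (simp add: powr_mult)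
  also have "x * (1 - 1/x) = x - 1"
    using x by (simp add: field_simps)
  finally show ?thesis
    using x by (simp add: powr_diff powr_minus field_simps)
qed

lemma sum_powr_tail_le:
  fixes S :: "nat set" and X \<eta> :: real
  assumes S: "finite S" "\<forall>p\<in>S. X < real p" and X: "X \<ge> 2" and \<eta>: "\<eta> > 0"
  shows "(\<Sum>p\<in>S. real p powr (-1 - \<eta>)) \<le> (X - 1) powr (-\<eta>) / \<eta>"
proof -
  define N where "N = nat \<lfloor>X\<rfloor>"
  define g where "g i = real i powr (-\<eta>) / \<eta>" for i :: nat
  define K where "K = Max (insert N S)"
  have floor_X: "2 \<le> \<lfloor>X\<rfloor>" using X by (simp add: le_floor_iff)
  then have N: "X - 1 \<le> real N" "2 \<le> N" by (auto simp: N_def le_nat_iff)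
  have S_range: "S \<subseteq> {Suc N..<Suc K}"
  proof
    fix p assume "p \<in> S"
    then have "\<lfloor>X\<rfloor> < int p" "p \<le> K" using S by (auto simp: K_def floor_less_iff)
    moreover have "N < p" using \<open>\<lfloor>X\<rfloor> < int p\<close> floor_X unfolding N_def by linarith
    ultimately show "p \<in> {Suc N..<Suc K}" by simp
  qed
  have "N \<le> K" using S(1) by (simp add: K_def)
  have step: "real p powr (-1 - \<eta>) \<le> g (p - 1) - g p" if "2 \<le> p" for p
    using powr_difference_ge[of "real p" \<eta>] that \<eta> by (simp add: g_def field_simps)
  have "(\<Sum>p\<in>S. real p powr (-1 - \<eta>)) \<le> (\<Sum>p\<in>S. g (p - 1) - g p)"
    using S_range N by (intro sum_mono step) auto
  also have "\<dots> \<le> (\<Sum>p\<in>{Suc N..<Suc K}. g (p - 1) - g p)"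
    using S_range N \<eta>
    by (intro sum_mono2) (auto simp: g_def intro!: divide_right_mono powr_mono2')
  also have "\<dots> = (\<Sum>i\<in>{N..<K}. g i - g (Suc i))"
    by (simp only: sum.shift_bounds_Suc_ivl diff_Suc_1)
  also have "\<dots> = g N - g K"
    using sum_Suc_diff'[OF \<open>N \<le> K\<close>, of "\<lambda>i. - g i"] by simp
  also have "\<dots> \<le> g N" using \<eta> by (simp add: g_def)
  also have "\<dots> \<le> (X - 1) powr (-\<eta>) / \<eta>"
    using N X \<eta> by (auto simp: g_def intro!: divide_right_mono powr_mono2')
  finally show ?thesis .
qed

lemma markov_inequality_sum:
  fixes w X :: "'a \<Rightarrow> real"
  assumes "finite S" "\<forall>e\<in>S. 0 \<le> w e" "\<forall>e\<in>S. 0 \<le> X e" "0 < t"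
  shows "(\<Sum>e\<in>{e\<in>S. t < X e}. w e) \<le> (\<Sum>e\<in>S. w e * X e) / t"
proof -
  have "t * (\<Sum>e\<in>{e\<in>S. t < X e}. w e) = (\<Sum>e\<in>{e\<in>S. t < X e}. w e * t)"
    by (simp add: sum_distrib_left mult.commute)
  also have "\<dots> \<le> (\<Sum>e\<in>{e\<in>S. t < X e}. w e * X e)"
    using assms(2) by (intro sum_mono mult_left_mono) auto
  also have "\<dots> \<le> (\<Sum>e\<in>S. w e * X e)"
    using assms by (intro sum_mono2) auto
  finally show ?thesis using assms(4) by (simp add: field_simps)
qed

subsection \<open>Weighted bipartite graphs\<close>

lemma muE_eq_sum: "muE \<mu> E = (\<Sum>e\<in>E. \<mu> (fst e) * \<mu> (snd e))"
  unfolding muE_def by (simp add: case_prod_beta)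

lemma mu_theta_eq:
  "E \<noteq> {} \<Longrightarrow> mu_theta \<theta> \<mu> V W E = (muE \<mu> E / (muS \<mu> V * muS \<mu> W)) powr \<theta> * muS \<mu> V * muS \<mu> W"
  unfolding mu_theta_def density_def by simp

lemma mu_theta_empty [simp]: "mu_theta \<theta> \<mu> V W {} = 0"
  unfolding mu_theta_def density_def by simp

context
  fixes \<mu> V W E
  assumes wbg: "weighted_bipartite_graph \<mu> V W E"
begin

lemma wbg_finite: "finite V" "finite W" "finite E"
  using wbg unfolding weighted_bipartite_graph_def by (auto intro: finite_subset[of E "V \<times> W"])

lemma wbg_vertex_weight_pos: "x \<in> V \<or> x \<in> W \<Longrightarrow> \<mu> x > 0"
  using wbg unfolding weighted_bipartite_graph_def by auto

lemma wbg_edge_weight_pos: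
  assumes "e \<in> E" shows "\<mu> (fst e) * \<mu> (snd e) > 0"
proof -
  have "fst e \<in> V" "snd e \<in> W" using assms wbg unfolding weighted_bipartite_graph_def by auto
  then show ?thesis using wbg_vertex_weight_pos by simp
qed

lemma muE_mono: "A \<subseteq> B \<Longrightarrow> B \<subseteq> E \<Longrightarrow> muE \<mu> A \<le> muE \<mu> B"
  unfolding muE_eq_sum using wbg_finite
  by (intro sum_mono2) (auto intro: finite_subset less_imp_le[OF wbg_edge_weight_pos])

lemma muE_nonneg: "A \<subseteq> E \<Longrightarrow> 0 \<le> muE \<mu> A"
  using muE_mono[of "{}" A] by (simp add: muE_def)

lemma muE_pos: "A \<subseteq> E \<Longrightarrow> A \<noteq> {} \<Longrightarrow> 0 < muE \<mu> A"
  unfolding muE_eq_sum using wbg_finite wbg_edge_weight_pos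
  by (intro sum_pos) (auto intro: finite_subset)

lemma muE_Diff: "A \<subseteq> B \<Longrightarrow> B \<subseteq> E \<Longrightarrow> muE \<mu> (B - A) = muE \<mu> B - muE \<mu> A"
  unfolding muE_eq_sum using wbg_finite by (intro sum_diff) (auto intro: finite_subset)

lemma muE_Un_le: "A \<subseteq> E \<Longrightarrow> B \<subseteq> E \<Longrightarrow> muE \<mu> (A \<union> B) \<le> muE \<mu> A + muE \<mu> B"
  using wbg_finite muE_nonneg[of "A \<inter> B"] unfolding muE_eq_sum
  by (subst sum_Un) (auto intro: finite_subset)

lemma muE_le_Un3:
  assumes "S \<subseteq> A \<union> B \<union> C" "A \<subseteq> E" "B \<subseteq> E" "C \<subseteq> E"
  shows "muE \<mu> S \<le> muE \<mu> A + muE \<mu> B + muE \<mu> C"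
proof -
  have "muE \<mu> S \<le> muE \<mu> (A \<union> B \<union> C)" using assms by (intro muE_mono) auto
  also have "\<dots> \<le> muE \<mu> (A \<union> B) + muE \<mu> C" using assms by (intro muE_Un_le) auto
  also have "muE \<mu> (A \<union> B) \<le> muE \<mu> A + muE \<mu> B" using assms by (intro muE_Un_le)
  finally show ?thesis by simp
qed

lemma muE_UN_le:
  "finite I \<Longrightarrow> (\<And>i. i \<in> I \<Longrightarrow> A i \<subseteq> E) \<Longrightarrow> muE \<mu> (\<Union>i\<in>I. A i) \<le> (\<Sum>i\<in>I. muE \<mu> (A i))"
proof (induction I rule: finite_induct)
  case (insert i I)
  then have "muE \<mu> (A i \<union> (\<Union>j\<in>I. A j)) \<le> muE \<mu> (A i) + muE \<mu> (\<Union>j\<in>I. A j)"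
    by (intro muE_Un_le) auto
  with insert show ?case by simp
qed (simp add: muE_def)

lemma muS_mono: "A \<subseteq> B \<Longrightarrow> B \<subseteq> V \<or> B \<subseteq> W \<Longrightarrow> muS \<mu> A \<le> muS \<mu> B"
  unfolding muS_def using wbg_finite
  by (intro sum_mono2) (auto intro: finite_subset less_imp_le[OF wbg_vertex_weight_pos])

lemma muS_nonneg: "A \<subseteq> V \<or> A \<subseteq> W \<Longrightarrow> 0 \<le> muS \<mu> A"
  using muS_mono[of "{}" A] by (simp add: muS_def)

lemma muS_pos: "A \<subseteq> V \<or> A \<subseteq> W \<Longrightarrow> A \<noteq> {} \<Longrightarrow> 0 < muS \<mu> A"
  unfolding muS_def using wbg_finite wbg_vertex_weight_pos
  by (intro sum_pos) (auto intro: finite_subset)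

lemma muS_Diff: "A \<subseteq> B \<Longrightarrow> B \<subseteq> V \<or> B \<subseteq> W \<Longrightarrow> muS \<mu> (B - A) = muS \<mu> B - muS \<mu> A"
  unfolding muS_def using wbg_finite by (intro sum_diff) (auto intro: finite_subset)

lemma wbg_masses_pos:
  assumes "E1 \<subseteq> E \<inter> (V1 \<times> W1)" "E1 \<noteq> {}" "V1 \<subseteq> V" "W1 \<subseteq> W"
  shows "0 < muS \<mu> V1" "0 < muS \<mu> W1" "0 < muE \<mu> E1"
  using assms muS_pos[of V1] muS_pos[of W1] muE_pos[of E1] by auto

lemma mu_theta_pos: "E \<noteq> {} \<Longrightarrow> 0 < mu_theta \<theta> \<mu> V W E"
  using wbg wbg_masses_pos[of E V W] by (auto simp: mu_theta_eq weighted_bipartite_graph_def)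

lemma muE_le_of_mu_theta_le:
  assumes E: "E \<noteq> {}" and sub: "V1 \<subseteq> V" "W1 \<subseteq> W" "E1 \<subseteq> E \<inter> (V1 \<times> W1)"
    and c: "c > 0" and \<theta>: "\<theta> > 0"
    and le: "mu_theta \<theta> \<mu> V1 W1 E1 \<le> c * mu_theta \<theta> \<mu> V W E"
  shows "muE \<mu> E1 \<le> c powr (1/\<theta>) * muE \<mu> E
                       * (muS \<mu> V1 * muS \<mu> W1 / (muS \<mu> V * muS \<mu> W)) powr (1 - 1/\<theta>)"
proof (cases "E1 = {}")
  case True
  then show ?thesis using muE_nonneg[of E] by (simp add: muE_def)
next
  case False
  define a A e1 e where "a = muS \<mu> V1 * muS \<mu> W1" and "A = muS \<mu> V * muS \<mu> W"
    and "e1 = muE \<mu> E1" and "e = muE \<mu> E"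
  have pos: "a > 0" "A > 0" "e1 > 0" "e > 0"
    using wbg_masses_pos[OF sub(3) False sub(1,2)] wbg wbg_masses_pos[of E V W] E
    by (auto simp: a_def A_def e1_def e_def weighted_bipartite_graph_def)
  define q where "q = c * (A / a)"
  have "(e1 / a) powr \<theta> * a \<le> c * ((e / A) powr \<theta> * A)"
    using le False E by (simp add: mu_theta_eq a_def A_def e1_def e_def mult.assoc)
  then have "(e1 / a) powr \<theta> \<le> q * (e / A) powr \<theta>"
    using pos by (simp add: q_def field_simps)
  then have "((e1 / a) powr \<theta>) powr (1/\<theta>) \<le> (q * (e / A) powr \<theta>) powr (1/\<theta>)"
    using \<theta> by (intro powr_mono2) auto
  also have "(q * (e / A) powr \<theta>) powr (1/\<theta>) = q powr (1/\<theta>) * (e / A)"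
    using pos c \<theta> by (simp add: q_def powr_mult powr_powr del: times_divide_eq_right)
      (simp add: powr_powr)
  finally have "e1 \<le> a * (q powr (1/\<theta>) * (e / A))"
    using pos \<theta> by (simp add: powr_powr field_simps)
  also have "\<dots> = c powr (1/\<theta>) * e * (a / A) powr (1 - 1/\<theta>)"
    using pos c by (simp add: q_def powr_mult powr_diff powr_divide field_simps)
  finally show ?thesis by (simp add: a_def A_def e1_def e_def)
qed

lemma mu_theta_ge_of_muE_ge:
  assumes "E1 \<subseteq> E" "E1 \<noteq> {}" "c \<ge> 0" "\<theta> \<ge> 0" "muE \<mu> E1 \<ge> c * muE \<mu> E"
  shows "mu_theta \<theta> \<mu> V W E1 \<ge> c powr \<theta> * mu_theta \<theta> \<mu> V W E"
proof -
  define D where "D = muS \<mu> V * muS \<mu> W"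
  have "E1 \<subseteq> E \<inter> (V \<times> W)" using assms(1) wbg by (auto simp: weighted_bipartite_graph_def)
  from wbg_masses_pos[OF this assms(2)] have D: "D > 0" by (simp add: D_def)
  have "c powr \<theta> * (muE \<mu> E / D) powr \<theta> = (c * (muE \<mu> E / D)) powr \<theta>"
    using assms(3) D muE_nonneg[of E] by (intro powr_mult[symmetric])
  also have "\<dots> \<le> (muE \<mu> E1 / D) powr \<theta>"
    using assms(3-5) D muE_nonneg[of E] by (intro powr_mono2) (auto simp: field_simps)
  finally have "c powr \<theta> * (muE \<mu> E / D) powr \<theta> * D \<le> (muE \<mu> E1 / D) powr \<theta> * D"
    using D by (intro mult_right_mono) auto
  then show ?thesis
    using assms(1,2) by (subst (1 2) mu_theta_eq) (auto simp: D_def mult.assoc)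
qed

end

lemma exists_maximal_subgraph:
  assumes "finite V" "finite W" "E \<subseteq> V \<times> W"
  obtains V' W' E' where "V' \<subseteq> V" "W' \<subseteq> W" "E' \<subseteq> E \<inter> (V' \<times> W')"
    "mu_theta \<theta> \<mu> V W E \<le> mu_theta \<theta> \<mu> V' W' E'" "maximal \<theta> \<mu> V' W' E'"
proof -
  define S where "S = {(V', W', E'). V' \<subseteq> V \<and> W' \<subseteq> W \<and> E' \<subseteq> E \<inter> (V' \<times> W')}"
  define F where "F = (\<lambda>(V', W', E'). mu_theta \<theta> \<mu> V' W' E')"
  have "S \<subseteq> Pow V \<times> Pow W \<times> Pow (V \<times> W)" using assms(3) by (auto simp: S_def)
  then have "finite S" by (rule finite_subset) (use assms(1,2) in simp)
  moreover have "(V, W, E) \<in> S" using assms(3) by (auto simp: S_def)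
  ultimately have "Max (F ` S) \<in> F ` S" by (intro Max_in) auto
  then obtain G where G: "G \<in> S" "Max (F ` S) = F G" by (rule imageE)
  have best: "F G' \<le> F G" if "G' \<in> S" for G'
    using that \<open>finite S\<close> by (simp flip: G(2))
  obtain V' W' E' where G_eq: "G = (V', W', E')" by (cases G)
  show ?thesis
  proof
    show "V' \<subseteq> V" "W' \<subseteq> W" "E' \<subseteq> E \<inter> (V' \<times> W')" using G(1) by (auto simp: S_def G_eq)
    show "mu_theta \<theta> \<mu> V W E \<le> mu_theta \<theta> \<mu> V' W' E'"
      using best[OF \<open>(V, W, E) \<in> S\<close>] by (simp add: F_def G_eq)
    show "maximal \<theta> \<mu> V' W' E'"
      unfolding maximal_def
    proof (intro allI impI)
      fix V'' W'' E'' assume "V'' \<subseteq> V'" "W'' \<subseteq> W'" "E'' \<subseteq> E' \<inter> (V'' \<times> W'')"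
      then have "(V'', W'', E'') \<in> S" using G(1) by (auto simp: S_def G_eq)
      then show "mu_theta \<theta> \<mu> V'' W'' E'' \<le> mu_theta \<theta> \<mu> V' W' E'"
        using best by (fastforce simp: F_def G_eq)
    qed
  qed
qed

subsection \<open>GCD graphs\<close>

lemma gcd_graph_wbg: "gcd_graph \<mu> V W E P f g \<Longrightarrow> weighted_bipartite_graph \<mu> V W E"
  unfolding gcd_graph_def by simp

lemma gcd_graph_subgraph:
  assumes G: "gcd_graph \<mu> V W E P f g" and sub: "V' \<subseteq> V" "W' \<subseteq> W" "E' \<subseteq> E \<inter> (V' \<times> W')"
  shows "gcd_graph \<mu> V' W' E' P f g"
proof -
  have "weighted_bipartite_graph \<mu> V' W' E'"
    using G sub by (auto simp: gcd_graph_def weighted_bipartite_graph_def intro: finite_subset)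
  then show ?thesis
    using G sub unfolding gcd_graph_def by (intro conjI ballI impI) blast+
qed

lemma finite_unbalanced_primes:
  assumes G: "gcd_graph \<mu> V W E P f g" and "v \<in> V" "w \<in> W"
  shows "finite {q\<in>P. f q \<noteq> g q}"
proof -
  define x where "x = numer v * denom v * (numer w * denom w)"
  have "v \<noteq> 0" "w \<noteq> 0"
    using G assms(2,3) by (auto simp: gcd_graph_def weighted_bipartite_graph_def)
  then have "x \<noteq> 0" by (simp add: x_def numer_nonzero denom_nonzero)
  have q_dvd: "int q dvd x" if "q \<in> P" "f q \<noteq> g q" for q
  proof -
    have "int q ^ nat (f q) dvd numer v" "int q ^ nat (- f q) dvd denom v"
         "int q ^ nat (g q) dvd numer w" "int q ^ nat (- g q) dvd denom w"
      using G that(1) assms(2,3) unfolding gcd_graph_def by blast+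
    then have "int q ^ nat (f q) * int q ^ nat (- f q) dvd numer v * denom v"
         "int q ^ nat (g q) * int q ^ nat (- g q) dvd numer w * denom w"
      by (simp_all add: mult_dvd_mono)
    then have "int q ^ (nat (f q) + nat (- f q) + (nat (g q) + nat (- g q))) dvd x"
      unfolding x_def power_add by (rule mult_dvd_mono)
    moreover have "nat (f q) + nat (- f q) + (nat (g q) + nat (- g q)) \<noteq> 0" using that(2) by linarith
    ultimately show ?thesis by (meson dvd_power dvd_trans not_gr_zero)
  qed
  have "{q\<in>P. f q \<noteq> g q} \<subseteq> {..nat \<bar>x\<bar>}"
  proof
    fix q assume "q \<in> {q\<in>P. f q \<noteq> g q}"
    then have "\<bar>int q\<bar> \<le> \<bar>x\<bar>" using q_dvd dvd_imp_le_int[OF \<open>x \<noteq> 0\<close>] by blast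
    then show "q \<in> {..nat \<bar>x\<bar>}" by simp
  qed
  then show ?thesis by (rule finite_subset) simp
qed

lemma unbalanced_primes_product_pos:
  "gcd_graph \<mu> V W E P f g \<Longrightarrow> 0 < (\<Prod>q\<in>{q\<in>P. f q \<noteq> g q}. real q ^ nat \<bar>f q - g q\<bar>)"
  unfolding gcd_graph_def by (intro prod_pos) (auto dest: prime_gt_0_nat)

lemma quality_refine_prime:
  assumes "p \<notin> P" "finite {q\<in>P. f q \<noteq> g q}"
  shows "quality \<theta> \<mu> V W E (insert p P) (f(p := i)) (g(p := j))
       = real p ^ nat \<bar>i - j\<bar> * quality \<theta> \<mu> V W E P f g"
proof -
  define Q where "Q = {q\<in>P. f q \<noteq> g q}"
  have "{q \<in> insert p P. (f(p := i)) q \<noteq> (g(p := j)) q} = (if i = j then Q else insert p Q)"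
    using assms(1) by (auto simp: Q_def)
  moreover have "p \<notin> Q" using assms(1) by (simp add: Q_def)
  moreover have "(\<Prod>q\<in>Q. real q ^ nat \<bar>(f(p := i)) q - (g(p := j)) q\<bar>)
               = (\<Prod>q\<in>Q. real q ^ nat \<bar>f q - g q\<bar>)"
    using \<open>p \<notin> Q\<close> by (intro prod.cong) auto
  ultimately show ?thesis
    using assms(2) unfolding quality_def Q_def[symmetric] by (simp add: mult_ac)
qed

lemma R_set_mono: "E' \<subseteq> E \<Longrightarrow> R_set P E' \<subseteq> R_set P E"
  unfolding R_set_def by blast

lemma structured_subset:
  assumes "structured P E" "E' \<subseteq> E"
  shows "structured P E'"
  unfolding structured_def
proof
  fix p assume "p \<in> R_set P E'"
  then have "p \<in> R_set P E" using R_set_mono[OF assms(2)] by blast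
  then obtain k where "\<forall>(v, w)\<in>E. (ep p v - k, ep p w - k) \<in> {(-1, 0), (0, -1), (0, 0), (0, 1), (1, 0)}"
    using assms(1) unfolding structured_def by blast
  then show "\<exists>k. \<forall>(v, w)\<in>E'. (ep p v - k, ep p w - k) \<in> {(-1, 0), (0, -1), (0, 0), (0, 1), (1, 0)}"
    using assms(2) by blast
qed

lemma finite_R_set:
  assumes "weighted_bipartite_graph \<mu> V W E"
  shows "finite (R_set P E)"
proof -
  define x where "x e = gcd (numer (fst e)) (numer (snd e)) * gcd (denom (fst e)) (denom (snd e))"
    for e :: "rat \<times> rat"
  have x_nonzero: "x e \<noteq> 0" if "e \<in> E" for e
  proof -
    have "fst e \<in> V" using that assms by (auto simp: weighted_bipartite_graph_def mem_Times_iff)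
    then have "fst e \<noteq> 0" using assms by (auto simp: weighted_bipartite_graph_def)
    then show ?thesis by (simp add: x_def numer_nonzero denom_nonzero)
  qed
  have "R_set P E \<subseteq> (\<Union>e\<in>E. {..nat \<bar>x e\<bar>})"
  proof
    fix p assume "p \<in> R_set P E"
    then obtain e where "e \<in> E" "int p dvd x e" unfolding R_set_def x_def by auto
    with x_nonzero have "\<bar>int p\<bar> \<le> \<bar>x e\<bar>" using dvd_imp_le_int by blast
    then have "p \<le> nat \<bar>x e\<bar>" by simp
    with \<open>e \<in> E\<close> show "p \<in> (\<Union>e\<in>E. {..nat \<bar>x e\<bar>})" by auto
  qed
  then show ?thesis
    by (rule finite_subset) (simp add: wbg_finite(3)[OF assms])
qed

subsection \<open>Sharp GCD graphs\<close>

locale sharp_gcd_graph =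
  fixes \<tau> M :: real and \<mu> :: "rat \<Rightarrow> real" and V W :: "rat set" and E :: "(rat \<times> rat) set"
    and P :: "nat set" and f g :: "nat \<Rightarrow> int"
  assumes \<tau>: "0 < \<tau>" "\<tau> < 1/100" and M: "M \<ge> 2"
    and gcd_graph: "gcd_graph \<mu> V W E P f g" and E_nonempty: "E \<noteq> {}"
    and maximal: "maximal (2 + \<tau>) \<mu> V W E"
    and R_large: "R_set P E \<subseteq> {p. real p > C6 \<tau> M}"
    and R_flat_empty: "R_flat \<tau> M \<mu> V W E P f g = {}"
begin

abbreviation "\<theta> \<equiv> 2 + \<tau>"
abbreviation "K \<equiv> C2 \<tau> M"
abbreviation "R \<equiv> R_set P E"
abbreviation "mV \<equiv> muS \<mu> V"
abbreviation "mW \<equiv> muS \<mu> W"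
abbreviation "mE \<equiv> muE \<mu> E"

lemma wbg: "weighted_bipartite_graph \<mu> V W E"
  using gcd_graph by (rule gcd_graph_wbg)

lemma E_subset: "E \<subseteq> V \<times> W"
  using wbg by (simp add: weighted_bipartite_graph_def)

lemma masses_pos: "0 < mV" "0 < mW" "0 < mE"
  using wbg_masses_pos[OF wbg, of E V W] E_subset E_nonempty by auto

lemma K_bounds: "2 * 10^18 \<le> K" "M \<le> K" "3 / \<tau> \<le> K" "K powr (10 / \<tau>) \<le> C6 \<tau> M" "K \<le> C6 \<tau> M"
proof -
  define c where "c = C1 \<tau> ^ 3"
  have C1: "10^6 \<le> C1 \<tau>" using \<tau> by (simp add: C1_def field_simps)
  then have "(10^6)^3 \<le> c" unfolding c_def by (intro power_mono) auto
  then have c: "10^18 \<le> c" by simp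
  have K_eq: "K = (10 * M) * c" by (simp add: C2_def c_def)
  have "(10 * 2) * 10^18 \<le> (10 * M) * c" using M c by (intro mult_mono) auto
  then show K: "2 * 10^18 \<le> K" by (simp add: K_eq)
  have "M * 1 \<le> M * (10 * c)" using M c by (intro mult_left_mono) auto
  then show "M \<le> K" by (simp add: K_eq mult_ac)
  have "3 / \<tau> \<le> C1 \<tau>" using \<tau> by (simp add: C1_def divide_right_mono)
  also have "C1 \<tau> ^ 1 \<le> c" unfolding c_def using C1 by (intro power_increasing) auto
  also have "1 * c \<le> (10 * M) * c" using M c by (intro mult_right_mono) auto
  finally show "3 / \<tau> \<le> K" by (simp add: K_eq)
  show C6: "K powr (10 / \<tau>) \<le> C6 \<tau> M" unfolding C6_def by (rule Max_ge) auto
  have "K powr 1 \<le> K powr (10 / \<tau>)" using K \<tau> by (intro powr_mono) (auto simp: field_simps)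
  with C6 K show "K \<le> C6 \<tau> M" by simp
qed

lemma R_sharp:
  assumes "p \<in> R"
  shows "prime p" "p \<notin> P" "K < real p" "p \<in> R_sharp \<tau> M \<mu> V W E P f g"
proof -
  show "prime p" "p \<notin> P" using assms by (auto simp: R_set_def)
  have "C6 \<tau> M < real p" using assms R_large by auto
  then show "K < real p" using K_bounds(5) by linarith
  show "p \<in> R_sharp \<tau> M \<mu> V W E P f g" using assms R_flat_empty by (auto simp: R_flat_def)
qed

lemma R_pos: "p \<in> R \<Longrightarrow> 0 < real p"
  using R_sharp(1) by (simp add: prime_gt_0_nat)

definition centre :: "nat \<Rightarrow> int" where
  "centre p = (SOME k. (1 - K / real p) * mV \<le> muS \<mu> (Vpk p k V) \<and>
                       (1 - K / real p) * mW \<le> muS \<mu> (Vpk p k W))"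

lemma off_centre_vertex_mass:
  assumes "p \<in> R"
  shows "muS \<mu> (V - Vpk p (centre p) V) \<le> K / real p * mV"
        "muS \<mu> (W - Vpk p (centre p) W) \<le> K / real p * mW"
proof -
  have "\<exists>k. (1 - K / real p) * mV \<le> muS \<mu> (Vpk p k V) \<and> (1 - K / real p) * mW \<le> muS \<mu> (Vpk p k W)"
    using R_sharp(4)[OF assms] by (auto simp: R_sharp_def)
  then have "(1 - K / real p) * mV \<le> muS \<mu> (Vpk p (centre p) V)"
            "(1 - K / real p) * mW \<le> muS \<mu> (Vpk p (centre p) W)"
    unfolding centre_def by (metis (mono_tags, lifting) someI_ex)+
  moreover have "Vpk p (centre p) V \<subseteq> V" "Vpk p (centre p) W \<subseteq> W" by (auto simp: Vpk_def)
  ultimately show "muS \<mu> (V - Vpk p (centre p) V) \<le> K / real p * mV"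
                  "muS \<mu> (W - Vpk p (centre p) W) \<le> K / real p * mW"
    by (simp_all add: muS_Diff[OF wbg] algebra_simps)
qed

abbreviation edge_class :: "nat \<Rightarrow> int \<Rightarrow> int \<Rightarrow> (rat \<times> rat) set" where
  "edge_class p i j \<equiv> E \<inter> (Vpk p i V \<times> Vpk p j W)"

text \<open>Condition (ii) of R^\<sharp>: refining G at p multiplies the quality by p^|i-j|.\<close>
lemma edge_class_mu_theta_le:
  assumes p: "p \<in> R" and "i \<noteq> j"
  shows "mu_theta \<theta> \<mu> (Vpk p i V) (Vpk p j W) (edge_class p i j)
           \<le> M / real p ^ nat \<bar>i - j\<bar> * mu_theta \<theta> \<mu> V W E"
proof -
  define D where "D = (\<Prod>q\<in>{q\<in>P. f q \<noteq> g q}. real q ^ nat \<bar>f q - g q\<bar>)"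
  obtain v w where "(v, w) \<in> E" using E_nonempty by auto
  then have fin: "finite {q\<in>P. f q \<noteq> g q}"
    using E_subset by (intro finite_unbalanced_primes[OF gcd_graph, of v w]) auto
  have "quality \<theta> \<mu> (Vpk p i V) (Vpk p j W) (edge_class p i j) (insert p P) (f(p := i)) (g(p := j))
                 < M * quality \<theta> \<mu> V W E P f g"
    using R_sharp(4)[OF p] assms(2) unfolding R_sharp_def by blast
  then have "real p ^ nat \<bar>i - j\<bar> * (mu_theta \<theta> \<mu> (Vpk p i V) (Vpk p j W) (edge_class p i j) * D)
             < M * (mu_theta \<theta> \<mu> V W E * D)"
    unfolding quality_refine_prime[OF R_sharp(2)[OF p] fin] by (simp add: quality_def D_def)
  moreover have "0 < D" "0 < real p"
    using unbalanced_primes_product_pos[OF gcd_graph] R_pos[OF p] by (auto simp: D_def)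
  ultimately show ?thesis by (simp add: field_simps)
qed

lemma edge_class_vertex_mass_le:
  assumes p: "p \<in> R" and "i \<noteq> j"
  shows "muS \<mu> (Vpk p i V) * muS \<mu> (Vpk p j W) \<le> K / real p * (mV * mW)"
proof -
  have le: "muS \<mu> (Vpk p i V) \<le> mV" "muS \<mu> (Vpk p j W) \<le> mW"
    and nonneg: "0 \<le> muS \<mu> (Vpk p i V)" "0 \<le> muS \<mu> (Vpk p j W)"
    using muS_mono[OF wbg] muS_nonneg[OF wbg] by (auto simp: Vpk_def)
  show ?thesis
  proof (cases "i = centre p")
    case True
    then have "Vpk p j W \<subseteq> W - Vpk p (centre p) W" using assms(2) by (auto simp: Vpk_def)
    then have "muS \<mu> (Vpk p j W) \<le> K / real p * mW"
      using muS_mono[OF wbg] off_centre_vertex_mass(2)[OF p] by (meson Diff_subset order.trans)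
    then have "muS \<mu> (Vpk p i V) * muS \<mu> (Vpk p j W) \<le> mV * (K / real p * mW)"
      using le nonneg by (intro mult_mono) auto
    then show ?thesis by (simp add: mult_ac)
  next
    case False
    then have "Vpk p i V \<subseteq> V - Vpk p (centre p) V" by (auto simp: Vpk_def)
    then have "muS \<mu> (Vpk p i V) \<le> K / real p * mV"
      using muS_mono[OF wbg] off_centre_vertex_mass(1)[OF p] by (meson Diff_subset order.trans)
    then have "muS \<mu> (Vpk p i V) * muS \<mu> (Vpk p j W) \<le> (K / real p * mV) * mW"
      using le nonneg masses_pos by (intro mult_mono) auto
    then show ?thesis by (simp add: mult_ac)
  qed
qed

lemma edge_class_mass_le:
  assumes p: "p \<in> R" and "i \<noteq> j"
  shows "muE \<mu> (edge_class p i j)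
           \<le> M powr (1/\<theta>) * (K / real p) powr (1 - 1/\<theta>) * (real p powr (-1/\<theta>)) ^ nat \<bar>i - j\<bar> * mE"
proof -
  define m where "m = nat \<bar>i - j\<bar>"
  have "muS \<mu> (Vpk p i V) * muS \<mu> (Vpk p j W) / (mV * mW) \<le> K / real p"
    using edge_class_vertex_mass_le[OF assms] masses_pos by (simp add: pos_divide_le_eq)
  then have ratio: "(muS \<mu> (Vpk p i V) * muS \<mu> (Vpk p j W) / (mV * mW)) powr (1 - 1/\<theta>)
                    \<le> (K / real p) powr (1 - 1/\<theta>)"
    using \<tau> masses_pos muS_nonneg[OF wbg] by (intro powr_mono2) (auto simp: Vpk_def)
  have "muE \<mu> (edge_class p i j) \<le> (M / real p ^ m) powr (1/\<theta>) * mE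
          * (muS \<mu> (Vpk p i V) * muS \<mu> (Vpk p j W) / (mV * mW)) powr (1 - 1/\<theta>)"
    using edge_class_mu_theta_le[OF assms] M R_pos[OF p] \<tau>
    by (intro muE_le_of_mu_theta_le[OF wbg E_nonempty]) (auto simp: Vpk_def m_def)
  also have "\<dots> \<le> (M / real p ^ m) powr (1/\<theta>) * mE * (K / real p) powr (1 - 1/\<theta>)"
    using ratio masses_pos by (intro mult_left_mono) auto
  also have "(M / real p ^ m) powr (1/\<theta>) = M powr (1/\<theta>) * (real p powr (-1/\<theta>)) ^ m"
    using M R_pos[OF p] by (simp add: powr_divide powr_realpow[symmetric] powr_powr powr_minus_divide
        flip: powr_power)
  finally show ?thesis by (simp add: m_def mult_ac)
qed

lemma two_le_powr_inverse_theta: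
  assumes "p \<in> R"
  shows "2 \<le> real p powr (1/\<theta>)"
proof -
  have p: "8 \<le> real p" using R_sharp(3)[OF assms] K_bounds(1) by simp
  have "(2::real) = 8 powr (1/3)" by (simp add: powr_numeral[symmetric] powr_powr)
  also have "\<dots> \<le> real p powr (1/3)" using p by (intro powr_mono2) auto
  also have "\<dots> \<le> real p powr (1/\<theta>)" using p \<tau> by (intro powr_mono) (auto simp: field_simps)
  finally show ?thesis .
qed

definition off_centre :: "nat \<Rightarrow> (rat \<times> rat) set" where
  "off_centre p = {(v, w) \<in> E. ep p v \<noteq> centre p \<and> ep p w \<noteq> centre p}"

definition left_centred :: "nat \<Rightarrow> nat \<Rightarrow> (rat \<times> rat) set" where
  "left_centred p d = {(v, w) \<in> E. ep p v = centre p \<and> int d \<le> \<bar>ep p w - centre p\<bar>}"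

definition right_centred :: "nat \<Rightarrow> nat \<Rightarrow> (rat \<times> rat) set" where
  "right_centred p d = {(v, w) \<in> E. ep p w = centre p \<and> int d \<le> \<bar>ep p v - centre p\<bar>}"

lemma off_centre_mass_le:
  assumes p: "p \<in> R"
  shows "muE \<mu> (off_centre p) \<le> (K / real p) powr (2 - 2/\<theta>) * mE"
proof -
  define V1 W1 where "V1 = V - Vpk p (centre p) V" and "W1 = W - Vpk p (centre p) W"
  have sub: "V1 \<subseteq> V" "W1 \<subseteq> W" "off_centre p \<subseteq> E \<inter> (V1 \<times> W1)"
    using E_subset by (auto simp: V1_def W1_def off_centre_def Vpk_def)
  have "0 \<le> K / real p * mV" using masses_pos K_bounds(1) by simp
  then have "muS \<mu> V1 * muS \<mu> W1 \<le> (K / real p * mV) * (K / real p * mW)"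
    using off_centre_vertex_mass[OF p] muS_nonneg[OF wbg] sub
    by (intro mult_mono) (auto simp: V1_def W1_def)
  then have "muS \<mu> V1 * muS \<mu> W1 / (mV * mW) \<le> (K / real p) ^ 2"
    using masses_pos by (simp add: pos_divide_le_eq power2_eq_square mult_ac)
  then have "(muS \<mu> V1 * muS \<mu> W1 / (mV * mW)) powr (1 - 1/\<theta>) \<le> ((K / real p) ^ 2) powr (1 - 1/\<theta>)"
    using \<tau> masses_pos muS_nonneg[OF wbg] sub by (intro powr_mono2) auto
  also have "((K / real p) ^ 2) powr (1 - 1/\<theta>) = (K / real p) powr (2 - 2/\<theta>)"
    using K_bounds(1) by (simp add: powr_powr flip: powr_numeral)
  finally have ratio: "(muS \<mu> V1 * muS \<mu> W1 / (mV * mW)) powr (1 - 1/\<theta>) \<le> (K / real p) powr (2 - 2/\<theta>)" .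
  have "muE \<mu> (off_centre p) \<le> 1 powr (1/\<theta>) * mE * (muS \<mu> V1 * muS \<mu> W1 / (mV * mW)) powr (1 - 1/\<theta>)"
    using maximal sub \<tau> by (intro muE_le_of_mu_theta_le[OF wbg E_nonempty sub]) (auto simp: maximal_def)
  also have "\<dots> \<le> mE * (K / real p) powr (2 - 2/\<theta>)"
    using ratio masses_pos by (simp add: mult_left_mono)
  finally show ?thesis by (simp add: mult_ac)
qed

lemma class_factor_le:
  assumes p: "p \<in> R"
  shows "M powr (1/\<theta>) * (K / real p) powr (1 - 1/\<theta>) * (real p powr (-1/\<theta>)) ^ d
           \<le> M * K * real p powr (-1 - (real d - 1)/\<theta>)"
proof -
  have "(real p powr (-1/\<theta>)) ^ d = real p powr (- real d / \<theta>)"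
    using R_pos[OF p] by (simp add: powr_power)
  moreover have "- real d / \<theta> - (1 - 1/\<theta>) = -1 - (real d - 1)/\<theta>"
    by (simp add: diff_divide_distrib)
  then have "real p powr (- real d / \<theta>) / real p powr (1 - 1/\<theta>) = real p powr (-1 - (real d - 1)/\<theta>)"
    by (metis powr_diff)
  ultimately have "(K / real p) powr (1 - 1/\<theta>) * (real p powr (-1/\<theta>)) ^ d
                   = K powr (1 - 1/\<theta>) * real p powr (-1 - (real d - 1)/\<theta>)"
    by (simp add: powr_divide flip: times_divide_eq_right)
  moreover have "M powr (1/\<theta>) * K powr (1 - 1/\<theta>) \<le> M * K"
    using powr_mono[of "1/\<theta>" 1 M] powr_mono[of "1 - 1/\<theta>" 1 K] M K_bounds(1) \<tau>
    by (intro mult_mono) auto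
  then have "M powr (1/\<theta>) * K powr (1 - 1/\<theta>) * real p powr (-1 - (real d - 1)/\<theta>)
             \<le> M * K * real p powr (-1 - (real d - 1)/\<theta>)"
    by (rule mult_right_mono) simp
  ultimately show ?thesis by (simp add: mult.assoc)
qed

text \<open>Grouped by the exponent on the non-central side, the edge classes decay geometrically
  with ratio p^(-1/\<theta>) \<le> 1/2.\<close>
lemma one_sided_mass_le:
  assumes p: "p \<in> R" and d: "1 \<le> d" and S: "S \<subseteq> E" "\<forall>e\<in>S. int d \<le> \<bar>h e - centre p\<bar>"
    and level: "\<And>j. j \<noteq> centre p \<Longrightarrow> {e\<in>S. h e = j} \<subseteq> edge_class p (centre p) j
                                         \<or> {e\<in>S. h e = j} \<subseteq> edge_class p j (centre p)"
  shows "muE \<mu> S \<le> 4 * M * K * real p powr (-1 - (real d - 1)/\<theta>) * mE"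
proof -
  define r where "r = real p powr (-1/\<theta>)"
  define c where "c = M powr (1/\<theta>) * (K / real p) powr (1 - 1/\<theta>) * mE"
  have r: "0 \<le> r" "r \<le> 1/2"
    using two_le_powr_inverse_theta[OF p] R_pos[OF p] by (auto simp: r_def powr_minus_divide field_simps)
  have "muE \<mu> {e\<in>S. h e = j} \<le> c * r ^ nat \<bar>j - centre p\<bar>" if "j \<in> h ` S" for j
  proof -
    have "j \<noteq> centre p" using that S(2) d by force
    then have "muE \<mu> {e\<in>S. h e = j} \<le> muE \<mu> (edge_class p (centre p) j)
             \<or> muE \<mu> {e\<in>S. h e = j} \<le> muE \<mu> (edge_class p j (centre p))"
      using level muE_mono[OF wbg] by (meson Int_lower1)
    moreover have "muE \<mu> (edge_class p (centre p) j) \<le> c * r ^ nat \<bar>j - centre p\<bar>"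
                  "muE \<mu> (edge_class p j (centre p)) \<le> c * r ^ nat \<bar>j - centre p\<bar>"
      using edge_class_mass_le[OF p, of "centre p" j] edge_class_mass_le[OF p, of j "centre p"]
        \<open>j \<noteq> centre p\<close>
      by (simp_all add: c_def r_def abs_minus_commute[of "centre p" j] mult_ac)
    ultimately show ?thesis by linarith
  qed
  then have "muE \<mu> S \<le> c * (2 * r ^ d / (1 - r))"
    unfolding muE_eq_sum using S r masses_pos M wbg_finite(3)[OF wbg]
    by (intro sum_by_level_le_geometric) (auto simp: c_def intro: finite_subset)
  also have "\<dots> \<le> c * (4 * r ^ d)"
  proof -
    have "2 * r ^ d \<le> (4 * (1 - r)) * r ^ d" using r by (intro mult_right_mono) auto
    then have "2 * r ^ d / (1 - r) \<le> 4 * r ^ d"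
      using r by (intro pos_divide_le_eq[THEN iffD2]) (auto simp: algebra_simps)
    then show ?thesis using masses_pos by (intro mult_left_mono) (auto simp: c_def)
  qed
  also have "\<dots> = 4 * (M powr (1/\<theta>) * (K / real p) powr (1 - 1/\<theta>) * r ^ d) * mE"
    by (simp add: c_def mult_ac)
  also have "\<dots> \<le> 4 * (M * K * real p powr (-1 - (real d - 1)/\<theta>)) * mE"
    using class_factor_le[OF p, of d] masses_pos by (simp add: r_def)
  finally show ?thesis by simp
qed

lemma centred_mass_le:
  assumes "p \<in> R" "1 \<le> d"
  shows "muE \<mu> (left_centred p d) \<le> 4 * M * K * real p powr (-1 - (real d - 1)/\<theta>) * mE"
    and "muE \<mu> (right_centred p d) \<le> 4 * M * K * real p powr (-1 - (real d - 1)/\<theta>) * mE"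
proof -
  show "muE \<mu> (left_centred p d) \<le> 4 * M * K * real p powr (-1 - (real d - 1)/\<theta>) * mE"
    by (rule one_sided_mass_le[where h = "\<lambda>e. ep p (snd e)"])
      (use assms E_subset in \<open>force simp: left_centred_def Vpk_def\<close>)+
  show "muE \<mu> (right_centred p d) \<le> 4 * M * K * real p powr (-1 - (real d - 1)/\<theta>) * mE"
    by (rule one_sided_mass_le[where h = "\<lambda>e. ep p (fst e)"])
      (use assms E_subset in \<open>force simp: right_centred_def Vpk_def\<close>)+
qed

definition ratio_edges :: "nat \<Rightarrow> (rat \<times> rat) set" where
  "ratio_edges p = {(v, w) \<in> E. prime_in p (v / w)}"

definition unstructured_edges :: "nat \<Rightarrow> (rat \<times> rat) set" where
  "unstructured_edges p = {(v, w) \<in> E.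
     (ep p v - centre p, ep p w - centre p) \<notin> {(-1, 0), (0, -1), (0, 0), (0, 1), (1, 0)}}"

lemma ratio_edges_subset:
  assumes "p \<in> R"
  shows "ratio_edges p \<subseteq> off_centre p \<union> left_centred p 1 \<union> right_centred p 1"
proof
  fix e assume "e \<in> ratio_edges p"
  then obtain v w where e: "e = (v, w)" "(v, w) \<in> E" "prime_in p (v / w)"
    by (auto simp: ratio_edges_def)
  moreover have "v \<noteq> 0" "w \<noteq> 0"
    using e(2) wbg by (auto simp: weighted_bipartite_graph_def)
  ultimately have "ep p v \<noteq> ep p w"
    using ep_nonzero_if_prime_in[of p "v / w"] ep_divide[of p v w] R_sharp(1)[OF assms] by auto
  with e show "e \<in> off_centre p \<union> left_centred p 1 \<union> right_centred p 1"
    by (auto simp: off_centre_def left_centred_def right_centred_def)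
qed

lemma unstructured_edges_subset:
  "unstructured_edges p \<subseteq> off_centre p \<union> left_centred p 2 \<union> right_centred p 2"
  by (auto simp: unstructured_edges_def off_centre_def left_centred_def right_centred_def)

lemma ratio_edges_mass_le:
  assumes p: "p \<in> R"
  shows "muE \<mu> (ratio_edges p) \<le> 10 * M * K / real p * mE"
proof -
  have "muE \<mu> (off_centre p) \<le> (K / real p) powr (2 - 2/\<theta>) * mE"
    by (rule off_centre_mass_le[OF p])
  also have "\<dots> \<le> (K / real p) powr 1 * mE"
    using R_sharp(3)[OF p] K_bounds(1) \<tau> masses_pos
    by (intro mult_right_mono powr_mono') (auto simp: field_simps)
  finally have "muE \<mu> (off_centre p) \<le> K / real p * mE"
    using R_pos[OF p] K_bounds(1) by simp
  moreover have "muE \<mu> (ratio_edges p)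
      \<le> muE \<mu> (off_centre p) + muE \<mu> (left_centred p 1) + muE \<mu> (right_centred p 1)"
    using ratio_edges_subset[OF p]
    by (rule muE_le_Un3[OF wbg]) (auto simp: off_centre_def left_centred_def right_centred_def)
  moreover have "K / real p * mE \<le> 2 * M * K / real p * mE"
    using M masses_pos K_bounds(1) R_pos[OF p] by (simp add: field_simps)
  ultimately show ?thesis using centred_mass_le[OF p, of 1] by (simp add: powr_minus_divide)
qed

abbreviation "\<eta> \<equiv> 1 - 2/\<theta>"

lemma eta_bounds: "0 < \<eta>" "\<eta> \<le> 1/\<theta>" "\<eta> = \<tau> / \<theta>"
proof -
  show eq: "\<eta> = \<tau> / \<theta>" using \<tau> by (simp add: field_simps)
  then show "0 < \<eta>" using \<tau> by simp
  show "\<eta> \<le> 1/\<theta>" unfolding eq using \<tau> by (intro divide_right_mono) auto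
qed

lemma unstructured_edges_mass_le:
  assumes p: "p \<in> R"
  shows "muE \<mu> (unstructured_edges p) \<le> 9 * M * K\<^sup>2 * (real p powr (-1 - \<eta>) * mE)"
proof -
  define X where "X = real p powr (-1 - \<eta>) * mE"
  have X: "0 \<le> X" using masses_pos by (simp add: X_def)
  have p_ge_1: "1 \<le> real p" using prime_ge_1_nat[OF R_sharp(1)[OF p]] by simp
  have K: "1 \<le> K" using K_bounds(1) by simp
  have "(K / real p) powr (2 - 2/\<theta>) = K powr (2 - 2/\<theta>) * real p powr (-1 - \<eta>)"
    using powr_minus_divide[of "real p" "2 - 2/\<theta>"] by (simp add: powr_divide)
  also have "\<dots> \<le> K\<^sup>2 * real p powr (-1 - \<eta>)"
    using K \<tau> powr_mono[of "2 - 2/\<theta>" 2 K] by (intro mult_right_mono) (auto simp flip: powr_numeral)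
  finally have "(K / real p) powr (2 - 2/\<theta>) * mE \<le> K\<^sup>2 * X"
    using masses_pos by (simp add: X_def mult_right_mono mult.assoc)
  then have off: "muE \<mu> (off_centre p) \<le> K\<^sup>2 * X"
    using off_centre_mass_le[OF p] by linarith
  have "real p powr (-1 - (real 2 - 1)/\<theta>) \<le> real p powr (-1 - \<eta>)"
    using p_ge_1 eta_bounds(2) by (intro powr_mono) auto
  then have "4 * M * K * real p powr (-1 - (real 2 - 1)/\<theta>) * mE \<le> 4 * M * K * X"
    using M K masses_pos by (simp add: X_def mult_right_mono mult_left_mono mult.assoc)
  then have centred: "muE \<mu> (left_centred p 2) \<le> 4 * M * K * X" "muE \<mu> (right_centred p 2) \<le> 4 * M * K * X"
    using centred_mass_le[OF p, of 2] by linarith+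
  have "muE \<mu> (unstructured_edges p)
      \<le> muE \<mu> (off_centre p) + muE \<mu> (left_centred p 2) + muE \<mu> (right_centred p 2)"
    using unstructured_edges_subset
    by (rule muE_le_Un3[OF wbg]) (auto simp: off_centre_def left_centred_def right_centred_def)
  also have "\<dots> \<le> (K\<^sup>2 + 8 * M * K) * X" using off centred by (simp add: algebra_simps)
  also have "\<dots> \<le> 9 * M * K\<^sup>2 * X"
  proof (rule mult_right_mono[OF _ X])
    have "1 * K\<^sup>2 \<le> M * K\<^sup>2" "M * K \<le> M * K\<^sup>2"
      using M K by (intro mult_right_mono mult_left_mono; simp add: power2_eq_square)+
    then show "K\<^sup>2 + 8 * M * K \<le> 9 * M * K\<^sup>2" by linarith
  qed
  finally show ?thesis by (simp add: X_def)
qed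

lemma C6_powr_eta_ge: "180 * K ^ 4 \<le> (C6 \<tau> M - 1) powr \<eta>"
proof -
  have K: "2 * 10^18 \<le> K" by (rule K_bounds(1))
  have "2 \<le> K" using K by simp
  then have C6: "K powr (10 / \<tau>) / 2 \<le> C6 \<tau> M - 1"
    using K_bounds(4,5) by linarith
  have "360 * K ^ 4 \<le> sqrt K * K ^ 4"
  proof (rule mult_right_mono)
    show "360 \<le> sqrt K" using K real_sqrt_le_mono[of "360\<^sup>2" K] by simp
  qed simp
  also have "sqrt K * K ^ 4 = K powr (1/2) * K powr 4"
    using K by (simp add: powr_half_sqrt)
  also have "\<dots> = K powr (9/2)"
    by (simp flip: powr_add)
  also have "\<dots> \<le> K powr (10 / \<theta>)"
    using K \<tau> by (intro powr_mono) (auto simp: field_simps)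
  also have "K powr (10 / \<theta>) = (K powr (10 / \<tau>)) powr \<eta>"
    using \<tau> by (simp add: powr_powr eta_bounds(3))
  also have "\<dots> = 2 powr \<eta> * (K powr (10 / \<tau>) / 2) powr \<eta>"
    by (simp add: powr_divide)
  also have "\<dots> \<le> 2 * (C6 \<tau> M - 1) powr \<eta>"
    using eta_bounds(1,2) \<tau> C6 K powr_mono[of \<eta> 1 2]
    by (intro mult_mono powr_mono2) (auto simp: field_simps)
  finally show ?thesis by simp
qed

lemma tail_constant_le: "9 * M * K\<^sup>2 * ((C6 \<tau> M - 1) powr (-\<eta>) / \<eta>) \<le> 1/20"
proof -
  have K: "2 * 10^18 \<le> K" by (rule K_bounds(1))
  have "1 / \<eta> = \<theta> / \<tau>" using \<tau> by (simp add: eta_bounds(3))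
  also have "\<dots> \<le> 3 / \<tau>" using \<tau> by (intro divide_right_mono) auto
  also have "\<dots> \<le> K" by (rule K_bounds(3))
  finally have inv_eta: "1 / \<eta> \<le> K" .
  have "(C6 \<tau> M - 1) powr (-\<eta>) / \<eta> = (1 / \<eta>) / (C6 \<tau> M - 1) powr \<eta>"
    using powr_minus_divide[of "C6 \<tau> M - 1" \<eta>] by simp
  also have "\<dots> \<le> K / (180 * K ^ 4)"
    using inv_eta C6_powr_eta_ge K eta_bounds(1) by (intro frac_le) auto
  finally have "9 * M * K\<^sup>2 * ((C6 \<tau> M - 1) powr (-\<eta>) / \<eta>) \<le> 9 * K * K\<^sup>2 * (K / (180 * K ^ 4))"
    using M K_bounds(2) eta_bounds(1) by (intro mult_mono) auto
  also have "\<dots> = 1/20" using K by (simp add: field_simps power2_eq_square power4_eq_xxxx)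
  finally show ?thesis .
qed

lemma unstructured_total_mass_le: "(\<Sum>p\<in>R. muE \<mu> (unstructured_edges p)) \<le> mE / 20"
proof -
  have "(\<Sum>p\<in>R. muE \<mu> (unstructured_edges p)) \<le> (\<Sum>p\<in>R. 9 * M * K\<^sup>2 * (real p powr (-1 - \<eta>) * mE))"
    by (intro sum_mono unstructured_edges_mass_le)
  also have "\<dots> = 9 * M * K\<^sup>2 * (\<Sum>p\<in>R. real p powr (-1 - \<eta>)) * mE"
    by (simp add: sum_distrib_left sum_distrib_right mult_ac)
  also have "\<dots> \<le> 9 * M * K\<^sup>2 * ((C6 \<tau> M - 1) powr (-\<eta>) / \<eta>) * mE"
    using finite_R_set[OF wbg] R_large K_bounds(1,5) eta_bounds(1) M masses_pos
    by (intro mult_right_mono mult_left_mono sum_powr_tail_le) auto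
  also have "\<dots> \<le> 1/20 * mE"
    using tail_constant_le masses_pos by (intro mult_right_mono) auto
  finally show ?thesis by simp
qed

definition heavy_edges :: "(nat \<Rightarrow> real) \<Rightarrow> nat \<Rightarrow> (rat \<times> rat) set" where
  "heavy_edges a n = {(v, w) \<in> E.
     C8 \<tau> M * real n * (\<Sum>p\<in>R. a p / real p) < (\<Sum>p\<in>{p. prime_in p (v / w) \<and> p \<in> R}. a p)}"

lemma sum_weighted_ratio_primes:
  "(\<Sum>e\<in>E. \<mu> (fst e) * \<mu> (snd e) * (\<Sum>p\<in>{p. prime_in p (fst e / snd e) \<and> p \<in> R}. a p))
     = (\<Sum>p\<in>R. a p * muE \<mu> (ratio_edges p))"
proof -
  have "(\<Sum>e\<in>E. \<mu> (fst e) * \<mu> (snd e) * (\<Sum>p\<in>{p. prime_in p (fst e / snd e) \<and> p \<in> R}. a p))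
      = (\<Sum>e\<in>E. \<Sum>p\<in>{p. p \<in> R \<and> prime_in p (fst e / snd e)}. \<mu> (fst e) * \<mu> (snd e) * a p)"
    by (simp add: sum_distrib_left conj_commute)
  also have "\<dots> = (\<Sum>p\<in>R. \<Sum>e\<in>{e. e \<in> E \<and> prime_in p (fst e / snd e)}. \<mu> (fst e) * \<mu> (snd e) * a p)"
    using wbg_finite(3)[OF wbg] finite_R_set[OF wbg] by (rule sum.swap_restrict)
  also have "\<dots> = (\<Sum>p\<in>R. a p * muE \<mu> (ratio_edges p))"
    by (simp add: ratio_edges_def muE_eq_sum sum_distrib_left split_def mult_ac)
  finally show ?thesis .
qed

lemma heavy_edges_mass_le:
  assumes "1 \<le> n" and a: "\<forall>p\<in>R. 0 \<le> a p"
  shows "muE \<mu> (heavy_edges a n) \<le> mE / (10 * real n)"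
proof -
  define T where "T = (\<Sum>p\<in>R. a p / real p)"
  define X where "X e = (\<Sum>p\<in>{p. prime_in p (fst e / snd e) \<and> p \<in> R}. a p)" for e :: "rat \<times> rat"
  have "0 \<le> T" unfolding T_def using a R_pos by (intro sum_nonneg) auto
  show ?thesis
  proof (cases "T = 0")
    case True
    then have "\<forall>p\<in>R. a p = 0"
      using a R_pos finite_R_set[OF wbg] by (auto simp: T_def sum_nonneg_eq_0_iff)
    then have "heavy_edges a n = {}" by (auto simp: heavy_edges_def True T_def[symmetric])
    then show ?thesis using masses_pos by (simp add: muE_def)
  next
    case False
    define t where "t = C8 \<tau> M * real n * T"
    have t: "0 < t"
      using False \<open>0 \<le> T\<close> assms(1) M K_bounds(1) by (simp add: t_def C8_def)
    have "heavy_edges a n = {e\<in>E. t < X e}"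
      by (auto simp: heavy_edges_def t_def T_def X_def)
    then have "muE \<mu> (heavy_edges a n) = (\<Sum>e\<in>{e\<in>E. t < X e}. \<mu> (fst e) * \<mu> (snd e))"
      by (simp add: muE_eq_sum)
    also have "\<dots> \<le> (\<Sum>e\<in>E. \<mu> (fst e) * \<mu> (snd e) * X e) / t"
      using wbg_finite(3)[OF wbg] wbg_edge_weight_pos[OF wbg] a t
      by (intro markov_inequality_sum) (auto simp: X_def intro: less_imp_le sum_nonneg)
    also have "\<dots> \<le> (\<Sum>p\<in>R. a p * (10 * M * K / real p * mE)) / t"
      unfolding X_def sum_weighted_ratio_primes using t a
      by (intro divide_right_mono sum_mono mult_left_mono ratio_edges_mass_le) auto
    also have "\<dots> = mE / (10 * real n)"
      using t assms(1) by (simp add: t_def T_def C8_def sum_distrib_left field_simps)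
    finally show ?thesis .
  qed
qed

definition bad_edges :: "nat \<Rightarrow> (nat \<Rightarrow> nat \<Rightarrow> real) \<Rightarrow> (rat \<times> rat) set" where
  "bad_edges n a = (\<Union>p\<in>R. unstructured_edges p) \<union> (\<Union>i\<in>{1..n}. heavy_edges (\<lambda>p. a p i) n)"

lemma bad_edges_subset: "bad_edges n a \<subseteq> E"
  by (auto simp: bad_edges_def unstructured_edges_def heavy_edges_def)

lemma bad_edges_mass_le:
  assumes n: "1 \<le> n" and a: "\<And>p i. prime p \<Longrightarrow> i \<in> {1..n} \<Longrightarrow> 0 \<le> a p i"
  shows "muE \<mu> (bad_edges n a) \<le> 3/20 * mE"
proof -
  have "muE \<mu> (\<Union>p\<in>R. unstructured_edges p) \<le> (\<Sum>p\<in>R. muE \<mu> (unstructured_edges p))"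
    using finite_R_set[OF wbg] by (intro muE_UN_le[OF wbg]) (auto simp: unstructured_edges_def)
  also have "\<dots> \<le> mE / 20" by (rule unstructured_total_mass_le)
  finally have U: "muE \<mu> (\<Union>p\<in>R. unstructured_edges p) \<le> mE / 20" .
  have "muE \<mu> (\<Union>i\<in>{1..n}. heavy_edges (\<lambda>p. a p i) n) \<le> (\<Sum>i\<in>{1..n}. muE \<mu> (heavy_edges (\<lambda>p. a p i) n))"
    by (intro muE_UN_le[OF wbg]) (auto simp: heavy_edges_def)
  also have "\<dots> \<le> (\<Sum>i\<in>{1..n}. mE / (10 * real n))"
    using n a R_sharp(1) by (intro sum_mono heavy_edges_mass_le) auto
  also have "\<dots> = mE / 10" using n by simp
  finally have H: "muE \<mu> (\<Union>i\<in>{1..n}. heavy_edges (\<lambda>p. a p i) n) \<le> mE / 10" .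
  have "muE \<mu> (bad_edges n a)
        \<le> muE \<mu> (\<Union>p\<in>R. unstructured_edges p) + muE \<mu> (\<Union>i\<in>{1..n}. heavy_edges (\<lambda>p. a p i) n)"
    unfolding bad_edges_def
    by (intro muE_Un_le[OF wbg]) (auto simp: unstructured_edges_def heavy_edges_def)
  with U H show ?thesis by linarith
qed

lemma good_edges_exist:
  assumes n: "1 \<le> n" and a: "\<And>p i. prime p \<Longrightarrow> i \<in> {1..n} \<Longrightarrow> 0 \<le> a p i"
  obtains E' where "E' \<subseteq> E" "structured P E'" "mu_theta \<theta> \<mu> V W E / 2 \<le> mu_theta \<theta> \<mu> V W E'"
    "\<forall>i\<in>{1..n}. \<forall>(v, w)\<in>E'. (\<Sum>p\<in>{p. prime_in p (v / w) \<and> p \<in> R}. a p i)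
                                  \<le> C8 \<tau> M * real n * (\<Sum>p\<in>R. a p i / real p)"
proof
  define E' where "E' = E - bad_edges n a"
  show "E' \<subseteq> E" by (simp add: E'_def)
  have "muE \<mu> E' = mE - muE \<mu> (bad_edges n a)"
    unfolding E'_def by (intro muE_Diff[OF wbg] bad_edges_subset) simp
  then have mass: "17/20 * mE \<le> muE \<mu> E'" using bad_edges_mass_le[of n a, OF n a] by linarith
  then have "E' \<noteq> {}" using masses_pos by (auto simp: muE_def)
  then have "(17/20) powr \<theta> * mu_theta \<theta> \<mu> V W E \<le> mu_theta \<theta> \<mu> V W E'"
    using mass \<tau> by (intro mu_theta_ge_of_muE_ge[OF wbg]) (auto simp: E'_def)
  moreover have "1/2 * mu_theta \<theta> \<mu> V W E \<le> (17/20) powr \<theta> * mu_theta \<theta> \<mu> V W E"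
  proof (rule mult_right_mono)
    have "(1/2 :: real) \<le> (17/20) powr 3" by (simp add: power3_eq_cube)
    also have "\<dots> \<le> (17/20) powr \<theta>" using \<tau> by (intro powr_mono') auto
    finally show "1/2 \<le> (17/20 :: real) powr \<theta>" .
  qed (use mu_theta_pos[OF wbg E_nonempty, of \<theta>] in simp)
  ultimately show "mu_theta \<theta> \<mu> V W E / 2 \<le> mu_theta \<theta> \<mu> V W E'" by simp
  show "structured P E'"
    unfolding structured_def
  proof
    fix p assume "p \<in> R_set P E'"
    then have "p \<in> R" using R_set_mono[of E' E P] by (auto simp: E'_def)
    then show "\<exists>k. \<forall>(v, w)\<in>E'. (ep p v - k, ep p w - k) \<in> {(-1, 0), (0, -1), (0, 0), (0, 1), (1, 0)}"
      by (intro exI[of _ "centre p"]) (auto simp: E'_def bad_edges_def unstructured_edges_def)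
  qed
  show "\<forall>i\<in>{1..n}. \<forall>(v, w)\<in>E'. (\<Sum>p\<in>{p. prime_in p (v / w) \<and> p \<in> R}. a p i)
                                  \<le> C8 \<tau> M * real n * (\<Sum>p\<in>R. a p i / real p)"
    by (auto simp: E'_def bad_edges_def heavy_edges_def not_less)
qed

lemma structured_maximal_subgraph_exists:
  assumes "1 \<le> n" and "\<And>p i. prime p \<Longrightarrow> i \<in> {1..n} \<Longrightarrow> 0 \<le> a p i"
  obtains V' W' E' where "V' \<subseteq> V" "W' \<subseteq> W" "E' \<subseteq> E \<inter> (V' \<times> W')"
    "E' \<noteq> {}" "structured P E'" "maximal \<theta> \<mu> V' W' E'"
    "mu_theta \<theta> \<mu> V W E / 2 \<le> mu_theta \<theta> \<mu> V' W' E'"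
    "\<forall>i\<in>{1..n}. \<forall>(v, w)\<in>E'. (\<Sum>p\<in>{p. prime_in p (v / w) \<and> p \<in> R}. a p i)
                                  \<le> C8 \<tau> M * real n * (\<Sum>p\<in>R. a p i / real p)"
proof -
  obtain Eg where Eg: "Eg \<subseteq> E" "structured P Eg" "mu_theta \<theta> \<mu> V W E / 2 \<le> mu_theta \<theta> \<mu> V W Eg"
    and bound: "\<forall>i\<in>{1..n}. \<forall>(v, w)\<in>Eg. (\<Sum>p\<in>{p. prime_in p (v / w) \<and> p \<in> R}. a p i)
                                       \<le> C8 \<tau> M * real n * (\<Sum>p\<in>R. a p i / real p)"
    by (rule good_edges_exist[OF assms])
  have "Eg \<subseteq> V \<times> W" using E_subset Eg(1) by blast
  then obtain V' W' E' where sub: "V' \<subseteq> V" "W' \<subseteq> W" "E' \<subseteq> Eg \<inter> (V' \<times> W')"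
    and larger: "mu_theta \<theta> \<mu> V W Eg \<le> mu_theta \<theta> \<mu> V' W' E'" and max: "maximal \<theta> \<mu> V' W' E'"
    by (rule exists_maximal_subgraph[OF wbg_finite(1,2)[OF wbg]])
  show thesis
  proof (rule that[OF sub(1,2) _ _ _ max])
    show "E' \<subseteq> E \<inter> (V' \<times> W')" using sub(3) Eg(1) by blast
    show "E' \<noteq> {}"
    proof
      assume "E' = {}"
      then show False using Eg(3) larger mu_theta_pos[OF wbg E_nonempty, of \<theta>] by simp
    qed
    show "structured P E'" using structured_subset[OF Eg(2)] sub(3) by auto
    show "mu_theta \<theta> \<mu> V W E / 2 \<le> mu_theta \<theta> \<mu> V' W' E'" using Eg(3) larger by simp
    show "\<forall>i\<in>{1..n}. \<forall>(v, w)\<in>E'. (\<Sum>p\<in>{p. prime_in p (v / w) \<and> p \<in> R}. a p i)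
                                  \<le> C8 \<tau> M * real n * (\<Sum>p\<in>R. a p i / real p)"
      using bound sub(3) by fast
  qed
qed

end

theorem proposition7p15:
  fixes \<tau> M :: real and \<mu> :: "rat \<Rightarrow> real" and V W :: "rat set" and E :: "(rat \<times> rat) set"
    and P :: "nat set" and f g :: "nat \<Rightarrow> int" and n :: nat and a :: "nat \<Rightarrow> nat \<Rightarrow> real"
  assumes "0 < \<tau>" and "\<tau> < 1/100" and "M \<ge> 2"
    and "gcd_graph \<mu> V W E P f g" and "E \<noteq> {}"
    and "maximal (2 + \<tau>) \<mu> V W E"
    and "R_set P E \<subseteq> {p. real p > C6 \<tau> M}"
    and "R_flat \<tau> M \<mu> V W E P f g = {}"
    and "n \<ge> 1"
    and "\<And>p i. prime p \<Longrightarrow> i \<in> {1..n} \<Longrightarrow> a p i \<ge> 0"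
  shows "\<exists>V' W' E' P' f' g'.
     gcd_subgraph \<mu> V' W' E' P' f' g' V W E P f g \<and> structured P' E' \<and>
     E' \<noteq> {} \<and> maximal (2 + \<tau>) \<mu> V' W' E' \<and>
     (\<forall>i\<in>{1..n}. \<forall>(v, w)\<in>E'.
        (\<Sum>p\<in>{p. prime_in p (v / w) \<and> p \<in> R_set P E}. a p i)
          \<le> C8 \<tau> M * real n * (\<Sum>p\<in>R_set P E. a p i / real p)) \<and>
     quality (2 + \<tau>) \<mu> V' W' E' P' f' g' \<ge> quality (2 + \<tau>) \<mu> V W E P f g / 2"
proof -
  interpret sharp_gcd_graph \<tau> M \<mu> V W E P f g
    using assms by unfold_locales
  obtain V' W' E' where sub: "V' \<subseteq> V" "W' \<subseteq> W" "E' \<subseteq> E \<inter> (V' \<times> W')"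
    and G': "E' \<noteq> {}" "structured P E'" "maximal \<theta> \<mu> V' W' E'"
    and half: "mu_theta \<theta> \<mu> V W E / 2 \<le> mu_theta \<theta> \<mu> V' W' E'"
    and bound: "\<forall>i\<in>{1..n}. \<forall>(v, w)\<in>E'. (\<Sum>p\<in>{p. prime_in p (v / w) \<and> p \<in> R}. a p i)
                                      \<le> C8 \<tau> M * real n * (\<Sum>p\<in>R. a p i / real p)"
    by (rule structured_maximal_subgraph_exists[OF assms(9,10)])
  have "gcd_subgraph \<mu> V' W' E' P f g V W E P f g"
    using gcd_graph_subgraph[OF gcd_graph sub] sub by (simp add: gcd_subgraph_def)
  moreover have "quality \<theta> \<mu> V W E P f g / 2 \<le> quality \<theta> \<mu> V' W' E' P f g"
    unfolding quality_def using half unbalanced_primes_product_pos[OF gcd_graph]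
    by (simp add: mult_right_mono)
  ultimately show ?thesis
    using G' bound
    by (intro exI[of _ V'] exI[of _ W'] exI[of _ E'] exI[of _ P] exI[of _ f] exI[of _ g] conjI)
qed

end
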